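(* Let $\beta\ge0$ be an integer, $x_0,y_0\in\mathbb{R}$, $a,b>0$, and $\Upsilon=[x_0-a,x_0+a]\times[y_0-b,y_0+b]$. Let $f:\Upsilon\to\mathbb{R}$ be continuous such that all partial derivatives $D^pf$ with $[p]=p_1+p_2\le\beta$ exist, $|D^pf(x,y)|\le1$ for all $(x,y)\in\Upsilon$ and all $p$ with $[p]\le\beta$ (with $D^0f=f$), and $$|D^pf(x,y)-D^pf(x',\tilde y)|\le\max\{|x-x'|,|y-\tilde y|\}\quad\text{for all }(x,y),(x',\tilde y)\in\Upsilon,\ [p]=\beta.$$ Let $y$ be a solution of $y'(x)=f(x,y(x))$, $y(x_0)=y_0$, on $[x_0-a,x_0+a]$ with $(x,y(x))\in\Upsilon$, and let $\alpha=a\wedge b$. Then for all $x,x'\in[x_0-\alpha,x_0+\alpha]$: $|y^{(k)}(x)|\le2^{k-1}(k-1)!$ for every $1\le k\le\beta+1$, and $$|y^{(\beta+1)}(x)-y^{(\beta+1)}(x')|\le2^{\beta+1}(\beta+1)!\,|x-x'|.$$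
   Context: For a multi-index $p=(p_1,p_2)$ of non-negative integers, $[p]=p_1+p_2$ and $D^pf=\partial^{[p]}f/\partial x^{p_1}\partial y^{p_2}$. *)

theory Defs
  imports "HOL-Analysis.Analysis"
begin

definition pdx :: "real set \<Rightarrow> (real \<times> real \<Rightarrow> real) \<Rightarrow> real \<times> real \<Rightarrow> real" where
  "pdx I g = (\<lambda>(x, y). vector_derivative (\<lambda>t. g (t, y)) (at x within I))"

definition pdy :: "real set \<Rightarrow> (real \<times> real \<Rightarrow> real) \<Rightarrow> real \<times> real \<Rightarrow> real" where
  "pdy J g = (\<lambda>(x, y). vector_derivative (\<lambda>s. g (x, s)) (at y within J))"

definition pD :: "real set \<Rightarrow> real set \<Rightarrow> nat \<times> nat \<Rightarrow> (real \<times> real \<Rightarrow> real) \<Rightarrow> real \<times> real \<Rightarrow> real" where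
  "pD I J p g = (pdx I ^^ fst p) ((pdy J ^^ snd p) g)"

text \<open>All D^p g with p1+p2 \<le> beta exist on I \<times> J (each differentiation step exists).\<close>
definition partials_exist :: "real set \<Rightarrow> real set \<Rightarrow> nat \<Rightarrow> (real \<times> real \<Rightarrow> real) \<Rightarrow> bool" where
  "partials_exist I J \<beta> g \<longleftrightarrow>
     (\<forall>p2. p2 < \<beta> \<longrightarrow> (\<forall>x\<in>I. \<forall>y\<in>J. \<exists>d.
        ((\<lambda>s. pD I J (0, p2) g (x, s)) has_real_derivative d) (at y within J))) \<and>
     (\<forall>p1 p2. p1 + p2 < \<beta> \<longrightarrow> (\<forall>x\<in>I. \<forall>y\<in>J. \<exists>d.
        ((\<lambda>t. pD I J (p1, p2) g (t, y)) has_real_derivative d) (at x within I)))"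

definition hderiv :: "real set \<Rightarrow> nat \<Rightarrow> (real \<Rightarrow> real) \<Rightarrow> real \<Rightarrow> real" where
  "hderiv I k h = ((\<lambda>u x. vector_derivative u (at x within I)) ^^ k) h"

end

(* Along the graph of a solution, d/dx D^p f(x, y(x)) = D^(p+(1,0)) f + D^(p+(0,1)) f * f.
   Starting from y' = f and differentiating by the product rule, y^(k+1) is therefore a sum of
   products of partials D^p f(x, y(x)) with [p] <= k; a product of l factors produces 2l products
   of at most l+1 factors, so y^(k+1) is a sum of at most 2^k k! products of at most k+1 factors.
   Each factor is bounded by 1 and, since the graph is 1-Lipschitz, is 2-Lipschitz in x; this gives
   both estimates.

   The hypotheses provide the mixed partials only in the order "first in y, then in x". The
   y-derivatives of D^(i,j) f needed for the chain rule are obtained by commuting derivatives,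
   which the Lipschitz bound on the partials of top order permits. *)
theory Submission
  imports Defs
begin

lemma abs_diff_le_by_derivative_bound:
  fixes g g' :: "real \<Rightarrow> real"
  assumes "\<And>t. t \<in> {min x x'..max x x'} \<Longrightarrow> (g has_real_derivative g' t) (at t within T)"
    and "{min x x'..max x x'} \<subseteq> T"
    and "\<And>t. t \<in> {min x x'..max x x'} \<Longrightarrow> \<bar>g' t\<bar> \<le> B"
  shows "\<bar>g x - g x'\<bar> \<le> B * \<bar>x - x'\<bar>"
proof -
  have "norm (g x - g x') \<le> B * norm (x - x')"
    using assms(2,3) DERIV_subset[OF assms(1)]
    by (intro field_differentiable_bound[where S="{min x x'..max x x'}" and f'=g']) auto
  then show ?thesis by simp
qed

lemma has_real_derivative_of_quadratic_remainder:
  fixes h :: "real \<Rightarrow> real"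
  assumes "\<And>v. v \<in> S \<Longrightarrow> \<bar>h v - h u - (v - u) * c\<bar> \<le> C * (v - u)\<^sup>2"
  shows "(h has_real_derivative c) (at u within S)"
proof -
  have "((\<lambda>v. (h v - h u) / (v - u) - c) \<longlongrightarrow> 0) (at u within S)"
  proof (rule Lim_null_comparison)
    show "\<forall>\<^sub>F v in at u within S. norm ((h v - h u) / (v - u) - c) \<le> C * \<bar>v - u\<bar>"
      unfolding eventually_at_filter
    proof (intro always_eventually allI impI)
      fix v assume "v \<noteq> u" "v \<in> S"
      then have "norm ((h v - h u) / (v - u) - c) = \<bar>h v - h u - (v - u) * c\<bar> / \<bar>v - u\<bar>"
        by (simp add: diff_divide_distrib[symmetric] field_simps)
      also have "\<dots> \<le> C * (v - u)\<^sup>2 / \<bar>v - u\<bar>"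
        using assms[OF \<open>v \<in> S\<close>] by (intro divide_right_mono) auto
      also have "\<dots> = C * \<bar>v - u\<bar>\<^sup>2 / \<bar>v - u\<bar>" by simp
      also have "\<dots> = C * \<bar>v - u\<bar>"
        using \<open>v \<noteq> u\<close> by (simp add: power2_eq_square del: abs_mult_self_eq)
      finally show "norm ((h v - h u) / (v - u) - c) \<le> C * \<bar>v - u\<bar>" .
    qed
    show "((\<lambda>v. C * \<bar>v - u\<bar>) \<longlongrightarrow> 0) (at u within S)"
    proof -
      have "((\<lambda>v. C * \<bar>v - u\<bar>) \<longlongrightarrow> C * \<bar>u - u\<bar>) (at u within S)"
        by (intro tendsto_intros)
      then show ?thesis by simp
    qed
  qed
  then show ?thesis
    by (simp add: has_field_derivative_iff LIM_zero_iff)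
qed

lemma vector_derivative_within_Icc_eq:
  fixes g :: "real \<Rightarrow> real"
  assumes "l < r" "x \<in> {l..r}" "(g has_real_derivative d) (at x within {l..r})"
  shows "vector_derivative g (at x within {l..r}) = d"
  using vector_derivative_within_closed_interval[OF assms(1,2)] assms(3)
  unfolding has_real_derivative_iff_has_vector_derivative by blast

section \<open>Formal derivatives of products of partials\<close>

(* A monomial [p_1, ..., p_l] stands for the product of the D^(p_i) f(x, y(x)); dmono is the
   product rule combined with the chain rule above, the index (0, 0) standing for the factor f. *)
fun dmono :: "(nat \<times> nat) list \<Rightarrow> (nat \<times> nat) list list" where
  "dmono [] = []"
| "dmono (p # m) = ((Suc (fst p), snd p) # m) # ((fst p, Suc (snd p)) # (0, 0) # m)
     # map ((#) p) (dmono m)"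

definition dpoly :: "(nat \<times> nat) list list \<Rightarrow> (nat \<times> nat) list list" where
  "dpoly P = concat (map dmono P)"

definition yderiv_poly :: "nat \<Rightarrow> (nat \<times> nat) list list" where
  "yderiv_poly k = (dpoly ^^ k) [[(0, 0)]]"

definition mono_val :: "(nat \<times> nat \<Rightarrow> real) \<Rightarrow> (nat \<times> nat) list \<Rightarrow> real" where
  "mono_val g m = prod_list (map g m)"

definition poly_val :: "(nat \<times> nat \<Rightarrow> real) \<Rightarrow> (nat \<times> nat) list list \<Rightarrow> real" where
  "poly_val g P = sum_list (map (mono_val g) P)"

lemma length_dmono: "length (dmono m) = 2 * length m"
  by (induction m) auto

lemma length_le_of_mem_dmono: "q \<in> set (dmono m) \<Longrightarrow> length q \<le> Suc (length m)"
  by (induction m arbitrary: q) auto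

lemma order_le_of_mem_dmono:
  assumes "\<forall>p\<in>set m. fst p + snd p \<le> k" "q \<in> set (dmono m)" "p \<in> set q"
  shows "fst p + snd p \<le> Suc k"
  using assms by (induction m arbitrary: q) fastforce+

lemma length_dpoly_le:
  assumes "\<forall>m\<in>set P. length m \<le> n"
  shows "length (dpoly P) \<le> 2 * n * length P"
  using assms
proof (induction P)
  case (Cons m P)
  then show ?case by (simp add: dpoly_def length_dmono)
qed (simp add: dpoly_def)

lemma yderiv_poly_Suc: "yderiv_poly (Suc k) = dpoly (yderiv_poly k)"
  by (simp add: yderiv_poly_def)

lemma length_le_of_mem_yderiv_poly: "m \<in> set (yderiv_poly k) \<Longrightarrow> length m \<le> Suc k"
proof (induction k arbitrary: m)
  case (Suc k)
  then obtain m' where "m' \<in> set (yderiv_poly k)" "m \<in> set (dmono m')"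
    by (auto simp: yderiv_poly_Suc dpoly_def)
  then show ?case using Suc.IH length_le_of_mem_dmono by fastforce
qed (simp add: yderiv_poly_def)

lemma order_le_of_mem_yderiv_poly:
  "m \<in> set (yderiv_poly k) \<Longrightarrow> p \<in> set m \<Longrightarrow> fst p + snd p \<le> k"
proof (induction k arbitrary: m p)
  case (Suc k)
  then obtain m' where "m' \<in> set (yderiv_poly k)" "m \<in> set (dmono m')"
    by (auto simp: yderiv_poly_Suc dpoly_def)
  then show ?case using Suc order_le_of_mem_dmono by blast
qed (simp add: yderiv_poly_def)

lemma length_yderiv_poly_le: "real (length (yderiv_poly k)) \<le> 2 ^ k * fact k"
proof (induction k)
  case 0
  then show ?case by (simp add: yderiv_poly_def)
next
  case (Suc k)
  have "length (yderiv_poly (Suc k)) \<le> 2 * Suc k * length (yderiv_poly k)"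
    unfolding yderiv_poly_Suc using length_le_of_mem_yderiv_poly by (intro length_dpoly_le) blast
  then have "real (length (yderiv_poly (Suc k))) \<le> 2 * real (Suc k) * real (length (yderiv_poly k))"
    by (metis of_nat_le_iff of_nat_mult of_nat_numeral)
  also have "\<dots> \<le> 2 * real (Suc k) * (2 ^ k * fact k)"
    using Suc.IH by (intro mult_left_mono) auto
  also have "\<dots> = 2 ^ Suc k * fact (Suc k)" by (simp add: algebra_simps)
  finally show ?case .
qed

lemma mono_val_Cons: "mono_val g (p # m) = g p * mono_val g m"
  by (simp add: mono_val_def)

lemma poly_val_Cons: "poly_val g (m # P) = mono_val g m + poly_val g P"
  by (simp add: poly_val_def)

lemma poly_val_append: "poly_val g (P @ P') = poly_val g P + poly_val g P'"
  by (simp add: poly_val_def)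

lemma poly_val_map_Cons: "poly_val g (map ((#) p) P) = g p * poly_val g P"
  by (simp add: poly_val_def mono_val_Cons o_def sum_list_const_mult)

lemma has_derivative_mono_val:
  assumes "\<And>p. p \<in> set m \<Longrightarrow> ((\<lambda>t. G t p) has_real_derivative
             G x (Suc (fst p), snd p) + G x (fst p, Suc (snd p)) * G x (0, 0)) (at x within S)"
  shows "((\<lambda>t. mono_val (G t) m) has_real_derivative poly_val (G x) (dmono m)) (at x within S)"
  using assms
proof (induction m)
  case Nil
  then show ?case by (simp add: mono_val_def poly_val_def)
next
  case (Cons p m)
  have "((\<lambda>t. G t p * mono_val (G t) m) has_real_derivative
      G x p * poly_val (G x) (dmono m)
      + (G x (Suc (fst p), snd p) + G x (fst p, Suc (snd p)) * G x (0, 0)) * mono_val (G x) m)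
      (at x within S)"
    using Cons by (intro DERIV_mult') auto
  moreover have "poly_val (G x) (dmono (p # m)) = G x p * poly_val (G x) (dmono m)
      + (G x (Suc (fst p), snd p) + G x (fst p, Suc (snd p)) * G x (0, 0)) * mono_val (G x) m"
    by (simp only: dmono.simps poly_val_Cons poly_val_map_Cons mono_val_Cons) (simp add: algebra_simps)
  ultimately show ?case
    by (simp only: mono_val_Cons)
qed

lemma abs_mono_val_le_1:
  assumes "\<And>p. p \<in> set m \<Longrightarrow> \<bar>g p\<bar> \<le> 1"
  shows "\<bar>mono_val g m\<bar> \<le> 1"
  using assms by (induction m) (auto simp: mono_val_def abs_mult intro: mult_le_one)

lemma abs_poly_val_le_length:
  assumes "\<And>m p. m \<in> set P \<Longrightarrow> p \<in> set m \<Longrightarrow> \<bar>g p\<bar> \<le> 1"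
  shows "\<bar>poly_val g P\<bar> \<le> length P"
  using assms
proof (induction P)
  case (Cons m P)
  then have "\<bar>mono_val g m\<bar> \<le> 1" by (intro abs_mono_val_le_1) auto
  moreover have "\<bar>poly_val g P\<bar> \<le> length P" using Cons by auto
  ultimately show ?case by (simp add: poly_val_Cons)
qed (simp add: poly_val_def)

lemma abs_mono_val_diff_le:
  fixes e :: real
  assumes "\<And>p. p \<in> set m \<Longrightarrow> \<bar>g p\<bar> \<le> 1 \<and> \<bar>h p\<bar> \<le> 1 \<and> \<bar>g p - h p\<bar> \<le> e"
  shows "\<bar>mono_val g m - mono_val h m\<bar> \<le> length m * e"
  using assms
proof (induction m)
  case (Cons p m)
  have gp: "\<bar>g p - h p\<bar> \<le> e" and hp: "\<bar>h p\<bar> \<le> 1" using Cons.prems by auto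
  have gm: "\<bar>mono_val g m\<bar> \<le> 1" using Cons.prems by (intro abs_mono_val_le_1) auto
  have IH: "\<bar>mono_val g m - mono_val h m\<bar> \<le> length m * e" using Cons by auto
  have "\<bar>mono_val g (p # m) - mono_val h (p # m)\<bar>
      = \<bar>(g p - h p) * mono_val g m + h p * (mono_val g m - mono_val h m)\<bar>"
    by (simp add: mono_val_Cons algebra_simps)
  also have "\<dots> \<le> \<bar>g p - h p\<bar> * \<bar>mono_val g m\<bar> + \<bar>h p\<bar> * \<bar>mono_val g m - mono_val h m\<bar>"
    by (metis abs_mult abs_triangle_ineq)
  also have "\<dots> \<le> e * 1 + 1 * (length m * e)"
    using gp hp gm IH by (intro add_mono mult_mono) auto
  finally show ?case by (simp add: algebra_simps)
qed (simp add: mono_val_def)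

lemma abs_poly_val_diff_le:
  fixes e :: real
  assumes "e \<ge> 0" and "\<And>m. m \<in> set P \<Longrightarrow> length m \<le> n"
    and "\<And>m p. m \<in> set P \<Longrightarrow> p \<in> set m \<Longrightarrow> \<bar>g p\<bar> \<le> 1 \<and> \<bar>h p\<bar> \<le> 1 \<and> \<bar>g p - h p\<bar> \<le> e"
  shows "\<bar>poly_val g P - poly_val h P\<bar> \<le> length P * (n * e)"
  using assms(2,3)
proof (induction P)
  case (Cons m P)
  have "\<bar>mono_val g m - mono_val h m\<bar> \<le> length m * e"
    using Cons.prems by (intro abs_mono_val_diff_le) auto
  also have "\<dots> \<le> n * e"
    using Cons.prems(1) \<open>e \<ge> 0\<close> by (intro mult_right_mono) auto
  finally have "\<bar>mono_val g m - mono_val h m\<bar> \<le> n * e" .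
  moreover have "\<bar>poly_val g P - poly_val h P\<bar> \<le> length P * (n * e)" using Cons by auto
  ultimately show ?case by (simp add: poly_val_Cons algebra_simps)
qed (simp add: poly_val_def)

section \<open>Partial derivatives on a rectangle\<close>

locale smooth_on_rectangle =
  fixes xl xr yl yr :: real and \<beta> :: nat and f :: "real \<times> real \<Rightarrow> real"
  assumes xl_less_xr: "xl < xr" and yl_less_yr: "yl < yr"
    and partials: "partials_exist {xl..xr} {yl..yr} \<beta> f"
    and partials_bounded: "\<forall>p1 p2. p1 + p2 \<le> \<beta> \<longrightarrow> (\<forall>z \<in> {xl..xr} \<times> {yl..yr}.
           \<bar>pD {xl..xr} {yl..yr} (p1, p2) f z\<bar> \<le> 1)"
    and top_partials_Lipschitz: "\<forall>p1 p2. p1 + p2 = \<beta> \<longrightarrow>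
           (\<forall>x\<in>{xl..xr}. \<forall>u\<in>{yl..yr}. \<forall>x'\<in>{xl..xr}. \<forall>u'\<in>{yl..yr}.
             \<bar>pD {xl..xr} {yl..yr} (p1, p2) f (x, u) - pD {xl..xr} {yl..yr} (p1, p2) f (x', u')\<bar>
             \<le> max \<bar>x - x'\<bar> \<bar>u - u'\<bar>)"
begin

abbreviation "I \<equiv> {xl..xr}"
abbreviation "J \<equiv> {yl..yr}"
abbreviation F where "F i j \<equiv> pD I J (i, j) f"

lemma F_0_0: "F 0 0 = f"
  by (simp add: pD_def)

lemma has_x_derivative_F:
  assumes "i + j < \<beta>" "x \<in> I" "u \<in> J"
  shows "((\<lambda>t. F i j (t, u)) has_real_derivative F (Suc i) j (x, u)) (at x within I)"
proof -
  obtain d where d: "((\<lambda>t. F i j (t, u)) has_real_derivative d) (at x within I)"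
    using partials assms unfolding partials_exist_def by blast
  moreover have "F (Suc i) j (x, u) = d"
    using vector_derivative_within_Icc_eq[OF xl_less_xr assms(2) d] by (simp add: pD_def pdx_def)
  ultimately show ?thesis by simp
qed

lemma has_y_derivative_F_0:
  assumes "j < \<beta>" "x \<in> I" "u \<in> J"
  shows "((\<lambda>s. F 0 j (x, s)) has_real_derivative F 0 (Suc j) (x, u)) (at u within J)"
proof -
  obtain d where d: "((\<lambda>s. F 0 j (x, s)) has_real_derivative d) (at u within J)"
    using partials assms unfolding partials_exist_def by blast
  moreover have "F 0 (Suc j) (x, u) = d"
    using vector_derivative_within_Icc_eq[OF yl_less_yr assms(3) d] by (simp add: pD_def pdy_def)
  ultimately show ?thesis by simp
qed

lemma abs_F_le_1: "i + j \<le> \<beta> \<Longrightarrow> x \<in> I \<Longrightarrow> u \<in> J \<Longrightarrow> \<bar>F i j (x, u)\<bar> \<le> 1"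
  using partials_bounded by auto

lemma F_Lipschitz_top:
  "i + j = \<beta> \<Longrightarrow> x \<in> I \<Longrightarrow> u \<in> J \<Longrightarrow> x' \<in> I \<Longrightarrow> u' \<in> J \<Longrightarrow>
   \<bar>F i j (x, u) - F i j (x', u')\<bar> \<le> max \<bar>x - x'\<bar> \<bar>u - u'\<bar>"
  using top_partials_Lipschitz by blast

lemma F_x_Lipschitz:
  assumes "i + j \<le> \<beta>" "x \<in> I" "x' \<in> I" "u \<in> J"
  shows "\<bar>F i j (x, u) - F i j (x', u)\<bar> \<le> \<bar>x - x'\<bar>"
proof (cases "i + j < \<beta>")
  case True
  have "\<bar>F i j (x, u) - F i j (x', u)\<bar> \<le> 1 * \<bar>x - x'\<bar>"
    using assms True
    by (intro abs_diff_le_by_derivative_bound[where T=I and g'="\<lambda>t. F (Suc i) j (t, u)"]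
        has_x_derivative_F abs_F_le_1) auto
  then show ?thesis by simp
next
  case False
  then show ?thesis using F_Lipschitz_top[of i j x u x' u] assms by simp
qed

lemma F_x_remainder:
  assumes "i + j < \<beta>" "x \<in> I" "x' \<in> I" "u \<in> J"
  shows "\<bar>F i j (x', u) - F i j (x, u) - (x' - x) * F (Suc i) j (x, u)\<bar> \<le> (x' - x)\<^sup>2"
proof -
  let ?g = "\<lambda>t. F i j (t, u) - t * F (Suc i) j (x, u)"
  have "\<bar>?g x' - ?g x\<bar> \<le> \<bar>x' - x\<bar> * \<bar>x' - x\<bar>"
  proof (rule abs_diff_le_by_derivative_bound[where T=I and g'="\<lambda>t. F (Suc i) j (t, u) - F (Suc i) j (x, u)"])
    fix t assume t: "t \<in> {min x' x..max x' x}"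
    then have "t \<in> I" using assms by auto
    then show "(?g has_real_derivative F (Suc i) j (t, u) - F (Suc i) j (x, u)) (at t within I)"
      using has_x_derivative_F[OF assms(1) _ assms(4)] by (auto intro!: derivative_eq_intros)
    have "\<bar>F (Suc i) j (t, u) - F (Suc i) j (x, u)\<bar> \<le> \<bar>t - x\<bar>"
      using F_x_Lipschitz[of "Suc i" j t x u] assms \<open>t \<in> I\<close> by auto
    also have "\<dots> \<le> \<bar>x' - x\<bar>" using t by auto
    finally show "\<bar>F (Suc i) j (t, u) - F (Suc i) j (x, u)\<bar> \<le> \<bar>x' - x\<bar>" .
  qed (use assms in auto)
  then show ?thesis by (simp add: algebra_simps power2_eq_square)
qed

lemma F_mixed_difference_bound:
  assumes ij: "Suc i + j < \<beta>"
    and dy: "\<And>x u. x \<in> I \<Longrightarrow> u \<in> J \<Longrightarrow>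
        ((\<lambda>s. F i j (x, s)) has_real_derivative F i (Suc j) (x, u)) (at u within J)"
    and Lip: "\<And>s. s \<in> J \<Longrightarrow> \<bar>F (Suc i) (Suc j) (x, s) - F (Suc i) (Suc j) (x, u)\<bar> \<le> \<bar>s - u\<bar>"
    and x: "x \<in> I" "x' \<in> I" and u: "u \<in> J" "v \<in> J"
  shows "\<bar>F i j (x', v) - F i j (x, v) - (F i j (x', u) - F i j (x, u))
           - (x' - x) * (v - u) * F (Suc i) (Suc j) (x, u)\<bar>
         \<le> (\<bar>x' - x\<bar> + \<bar>v - u\<bar>) * \<bar>v - u\<bar> * \<bar>x' - x\<bar>"
proof -
  define c where "c = F (Suc i) (Suc j) (x, u)"
  define \<phi> where "\<phi> s = F i j (x', s) - F i j (x, s) - (x' - x) * c * s" for s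
  have "\<bar>\<phi> v - \<phi> u\<bar> \<le> \<bar>x' - x\<bar> * (\<bar>x' - x\<bar> + \<bar>v - u\<bar>) * \<bar>v - u\<bar>"
  proof (rule abs_diff_le_by_derivative_bound
      [where T=J and g'="\<lambda>s. F i (Suc j) (x', s) - F i (Suc j) (x, s) - (x' - x) * c"])
    fix s assume s: "s \<in> {min v u..max v u}"
    then have "s \<in> J" using u by auto
    then show "(\<phi> has_real_derivative F i (Suc j) (x', s) - F i (Suc j) (x, s) - (x' - x) * c)
        (at s within J)"
      unfolding \<phi>_def using dy x by (auto intro!: derivative_eq_intros)
    have "\<bar>F i (Suc j) (x', s) - F i (Suc j) (x, s) - (x' - x) * F (Suc i) (Suc j) (x, s)\<bar>
        \<le> \<bar>x' - x\<bar> * \<bar>x' - x\<bar>"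
      using F_x_remainder[of i "Suc j" x x' s] ij x \<open>s \<in> J\<close> by (auto simp: power2_eq_square)
    moreover have "\<bar>(x' - x) * (F (Suc i) (Suc j) (x, s) - c)\<bar> \<le> \<bar>x' - x\<bar> * \<bar>v - u\<bar>"
      unfolding abs_mult c_def
      using Lip[OF \<open>s \<in> J\<close>] s by (intro mult_left_mono) auto
    ultimately show "\<bar>F i (Suc j) (x', s) - F i (Suc j) (x, s) - (x' - x) * c\<bar>
        \<le> \<bar>x' - x\<bar> * (\<bar>x' - x\<bar> + \<bar>v - u\<bar>)"
      by (smt (verit, best) distrib_left right_diff_distrib)
  qed (use u in auto)
  moreover have "\<phi> v - \<phi> u = F i j (x', v) - F i j (x, v) - (F i j (x', u) - F i j (x, u))
      - (x' - x) * (v - u) * F (Suc i) (Suc j) (x, u)"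
    unfolding \<phi>_def c_def by (simp add: algebra_simps)
  ultimately show ?thesis by (simp add: mult_ac)
qed

(* The y-difference quotients of F (i+1) j are limits, as x' tends to x, of mixed second
   differences of F i j divided by x' - x. *)
lemma has_y_derivative_F_Suc_x:
  assumes ij: "Suc i + j < \<beta>"
    and dy: "\<And>x u. x \<in> I \<Longrightarrow> u \<in> J \<Longrightarrow>
        ((\<lambda>s. F i j (x, s)) has_real_derivative F i (Suc j) (x, u)) (at u within J)"
    and Lip: "\<And>s. s \<in> J \<Longrightarrow> \<bar>F (Suc i) (Suc j) (x, s) - F (Suc i) (Suc j) (x, u)\<bar> \<le> \<bar>s - u\<bar>"
    and x: "x \<in> I" and u: "u \<in> J"
  shows "((\<lambda>s. F (Suc i) j (x, s)) has_real_derivative F (Suc i) (Suc j) (x, u)) (at u within J)"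
proof (rule has_real_derivative_of_quadratic_remainder[where C=1])
  fix v assume v: "v \<in> J"
  define c where "c = F (Suc i) (Suc j) (x, u)"
  define A where "A t = F i j (t, v) - F i j (t, u)" for t
  have "(A has_real_derivative F (Suc i) j (x, v) - F (Suc i) j (x, u)) (at x within I)"
    unfolding A_def using ij x u v by (intro DERIV_diff has_x_derivative_F) auto
  then have lim: "((\<lambda>t. \<bar>(A t - A x) / (t - x) - (v - u) * c\<bar>) \<longlongrightarrow>
      \<bar>F (Suc i) j (x, v) - F (Suc i) j (x, u) - (v - u) * c\<bar>) (at x within I)"
    by (intro tendsto_intros) (simp add: has_field_derivative_iff)
  have bound: "\<bar>(A t - A x) / (t - x) - (v - u) * c\<bar> \<le> (\<bar>t - x\<bar> + \<bar>v - u\<bar>) * \<bar>v - u\<bar>"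
    if "t \<in> I" "t \<noteq> x" for t
  proof -
    have "A t - A x - (t - x) * (v - u) * c = F i j (t, v) - F i j (x, v) - (F i j (t, u) - F i j (x, u))
        - (t - x) * (v - u) * F (Suc i) (Suc j) (x, u)"
      unfolding A_def c_def by (simp add: algebra_simps)
    then have "\<bar>A t - A x - (t - x) * (v - u) * c\<bar> \<le> (\<bar>t - x\<bar> + \<bar>v - u\<bar>) * \<bar>v - u\<bar> * \<bar>t - x\<bar>"
      using F_mixed_difference_bound[OF ij dy Lip x that(1) u v] by simp
    moreover have "(A t - A x) / (t - x) - (v - u) * c = (A t - A x - (t - x) * (v - u) * c) / (t - x)"
      using that(2) by (simp add: field_simps)
    ultimately show ?thesis
      using that(2) by (simp add: abs_divide pos_divide_le_eq)
  qed
  have "\<bar>F (Suc i) j (x, v) - F (Suc i) j (x, u) - (v - u) * c\<bar> \<le> (\<bar>x - x\<bar> + \<bar>v - u\<bar>) * \<bar>v - u\<bar>"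
  proof (rule tendsto_le[OF _ _ lim])
    show "at x within I \<noteq> bot"
      using x trivial_limit_within islimpt_Icc[OF xl_less_xr] by auto
    show "((\<lambda>t. (\<bar>t - x\<bar> + \<bar>v - u\<bar>) * \<bar>v - u\<bar>) \<longlongrightarrow> (\<bar>x - x\<bar> + \<bar>v - u\<bar>) * \<bar>v - u\<bar>) (at x within I)"
      by (intro tendsto_intros)
    show "\<forall>\<^sub>F t in at x within I. \<bar>(A t - A x) / (t - x) - (v - u) * c\<bar> \<le> (\<bar>t - x\<bar> + \<bar>v - u\<bar>) * \<bar>v - u\<bar>"
      unfolding eventually_at_filter by (intro always_eventually allI impI bound) auto
  qed
  then show "\<bar>F (Suc i) j (x, v) - F (Suc i) j (x, u) - (v - u) * F (Suc i) (Suc j) (x, u)\<bar> \<le> 1 * (v - u)\<^sup>2"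
    unfolding c_def by (simp add: power2_eq_square)
qed

lemma has_y_derivative_F:
  assumes "i + j < \<beta>" "x \<in> I" "u \<in> J"
  shows "((\<lambda>s. F i j (x, s)) has_real_derivative F i (Suc j) (x, u)) (at u within J)"
  using assms
proof (induction i arbitrary: j x u)
  case 0
  then show ?case using has_y_derivative_F_0 by simp
next
  case (Suc i)
  (* Downward induction on j: F (i+1) (j+1) is 1-Lipschitz in y either by the top-order
     hypothesis or because its y-derivative exists by the inner induction hypothesis. *)
  from Suc.prems show ?case
  proof (induction "\<beta> - j" arbitrary: j x u rule: less_induct)
    case less
    show ?case
    proof (rule has_y_derivative_F_Suc_x)
      show "((\<lambda>s. F i j (x, s)) has_real_derivative F i (Suc j) (x, u)) (at u within J)"
        if "x \<in> I" "u \<in> J" for x u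
        using Suc.IH less.prems(1) that by simp
      show "\<bar>F (Suc i) (Suc j) (x, s) - F (Suc i) (Suc j) (x, u)\<bar> \<le> \<bar>s - u\<bar>" if "s \<in> J" for s
      proof (cases "Suc i + Suc j < \<beta>")
        case True
        have "\<bar>F (Suc i) (Suc j) (x, s) - F (Suc i) (Suc j) (x, u)\<bar> \<le> 1 * \<bar>s - u\<bar>"
          using True less.prems that
          by (intro abs_diff_le_by_derivative_bound[where T=J and g'="\<lambda>t. F (Suc i) (Suc (Suc j)) (x, t)"]
              less.hyps abs_F_le_1) auto
        then show ?thesis by simp
      next
        case False
        then show ?thesis
          using F_Lipschitz_top[of "Suc i" "Suc j" x s x u] less.prems that by simp
      qed
    qed (use less.prems in auto)
  qed
qed

lemma F_y_Lipschitz: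
  assumes "i + j \<le> \<beta>" "x \<in> I" "u \<in> J" "u' \<in> J"
  shows "\<bar>F i j (x, u) - F i j (x, u')\<bar> \<le> \<bar>u - u'\<bar>"
proof (cases "i + j < \<beta>")
  case True
  have "\<bar>F i j (x, u) - F i j (x, u')\<bar> \<le> 1 * \<bar>u - u'\<bar>"
    using assms True
    by (intro abs_diff_le_by_derivative_bound[where T=J and g'="\<lambda>s. F i (Suc j) (x, s)"]
        has_y_derivative_F abs_F_le_1) auto
  then show ?thesis by simp
next
  case False
  then show ?thesis using F_Lipschitz_top[of i j x u x u'] assms by simp
qed

lemma F_y_remainder:
  assumes "i + j < \<beta>" "x \<in> I" "u \<in> J" "u' \<in> J"
  shows "\<bar>F i j (x, u') - F i j (x, u) - (u' - u) * F i (Suc j) (x, u)\<bar> \<le> (u' - u)\<^sup>2"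
proof -
  let ?g = "\<lambda>s. F i j (x, s) - s * F i (Suc j) (x, u)"
  have "\<bar>?g u' - ?g u\<bar> \<le> \<bar>u' - u\<bar> * \<bar>u' - u\<bar>"
  proof (rule abs_diff_le_by_derivative_bound[where T=J and g'="\<lambda>s. F i (Suc j) (x, s) - F i (Suc j) (x, u)"])
    fix s assume s: "s \<in> {min u' u..max u' u}"
    then have "s \<in> J" using assms by auto
    then show "(?g has_real_derivative F i (Suc j) (x, s) - F i (Suc j) (x, u)) (at s within J)"
      using has_y_derivative_F[OF assms(1,2)] by (auto intro!: derivative_eq_intros)
    have "\<bar>F i (Suc j) (x, s) - F i (Suc j) (x, u)\<bar> \<le> \<bar>s - u\<bar>"
      using F_y_Lipschitz[of i "Suc j" x s u] assms \<open>s \<in> J\<close> by auto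
    also have "\<dots> \<le> \<bar>u' - u\<bar>" using s by auto
    finally show "\<bar>F i (Suc j) (x, s) - F i (Suc j) (x, u)\<bar> \<le> \<bar>u' - u\<bar>" .
  qed (use assms in auto)
  then show ?thesis by (simp add: algebra_simps power2_eq_square)
qed

end

section \<open>Derivatives of a solution\<close>

locale ode_solution_on_rectangle = smooth_on_rectangle +
  fixes y :: "real \<Rightarrow> real"
  assumes solution: "\<forall>x\<in>{xl..xr}. (y has_real_derivative f (x, y x)) (at x within {xl..xr})"
    and graph_in_rectangle: "\<forall>x\<in>{xl..xr}. (x, y x) \<in> {xl..xr} \<times> {yl..yr}"
begin

lemma solution_in_J: "x \<in> I \<Longrightarrow> y x \<in> J"
  using graph_in_rectangle by auto

lemma abs_solution_diff_le:
  assumes "x \<in> I" "x' \<in> I"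
  shows "\<bar>y x - y x'\<bar> \<le> \<bar>x - x'\<bar>"
proof -
  have "\<bar>y x - y x'\<bar> \<le> 1 * \<bar>x - x'\<bar>"
  proof (rule abs_diff_le_by_derivative_bound[where T=I and g'="\<lambda>t. f (t, y t)"])
    fix t assume "t \<in> {min x x'..max x x'}"
    then have "t \<in> I" using assms by auto
    then show "(y has_real_derivative f (t, y t)) (at t within I)" "\<bar>f (t, y t)\<bar> \<le> 1"
      using solution abs_F_le_1[of 0 0 t "y t"] solution_in_J by (auto simp: F_0_0)
  qed (use assms in auto)
  then show ?thesis by simp
qed

lemma has_derivative_F_along_solution:
  assumes ij: "i + j < \<beta>" and x: "x \<in> I"
  shows "((\<lambda>t. F i j (t, y t)) has_real_derivative
     F (Suc i) j (x, y x) + F i (Suc j) (x, y x) * f (x, y x)) (at x within I)"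
proof -
  define A where "A = F (Suc i) j (x, y x)"
  define B where "B = F i (Suc j) (x, y x)"
  define R where "R t = F i j (t, y t) - F i j (x, y x) - B * (y t - y x)" for t
  have "(R has_real_derivative A) (at x within I)"
  proof (rule has_real_derivative_of_quadratic_remainder[where C=3])
    fix t assume t: "t \<in> I"
    have y_diff: "\<bar>y t - y x\<bar> \<le> \<bar>t - x\<bar>"
      using abs_solution_diff_le[OF t x] .
    have "\<bar>F i j (t, y t) - F i j (x, y t) - (t - x) * F (Suc i) j (x, y t)\<bar> \<le> (t - x)\<^sup>2"
      using F_x_remainder[OF ij x t solution_in_J[OF t]] .
    moreover have "\<bar>(t - x) * (F (Suc i) j (x, y t) - A)\<bar> \<le> (t - x)\<^sup>2"
    proof -
      have "\<bar>F (Suc i) j (x, y t) - A\<bar> \<le> \<bar>t - x\<bar>"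
        unfolding A_def using F_y_Lipschitz[of "Suc i" j x "y t" "y x"] ij x t solution_in_J y_diff
        by fastforce
      then have "\<bar>t - x\<bar> * \<bar>F (Suc i) j (x, y t) - A\<bar> \<le> \<bar>t - x\<bar> * \<bar>t - x\<bar>"
        by (rule mult_left_mono) simp
      then show ?thesis
        by (simp add: abs_mult power2_eq_square)
    qed
    moreover have "\<bar>F i j (x, y t) - F i j (x, y x) - (y t - y x) * B\<bar> \<le> (t - x)\<^sup>2"
    proof -
      have "\<bar>F i j (x, y t) - F i j (x, y x) - (y t - y x) * B\<bar> \<le> (y t - y x)\<^sup>2"
        unfolding B_def using F_y_remainder[OF ij x solution_in_J[OF x] solution_in_J[OF t]] .
      also have "\<dots> \<le> (t - x)\<^sup>2"
        using y_diff by (metis abs_ge_zero power2_abs power_mono)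
      finally show ?thesis .
    qed
    moreover have "R t - R x - (t - x) * A =
        (F i j (t, y t) - F i j (x, y t) - (t - x) * F (Suc i) j (x, y t))
      + (t - x) * (F (Suc i) j (x, y t) - A)
      + (F i j (x, y t) - F i j (x, y x) - (y t - y x) * B)"
      unfolding R_def by (simp add: algebra_simps)
    ultimately show "\<bar>R t - R x - (t - x) * A\<bar> \<le> 3 * (t - x)\<^sup>2"
      by linarith
  qed
  then have "((\<lambda>t. F i j (x, y x) + B * (y t - y x) + R t) has_real_derivative B * f (x, y x) + A)
      (at x within I)"
    using solution x by (auto intro!: derivative_eq_intros)
  then show ?thesis
    unfolding A_def B_def R_def by (simp add: add.commute)
qed

definition partials_along :: "real \<Rightarrow> nat \<times> nat \<Rightarrow> real" where
  "partials_along t p = F (fst p) (snd p) (t, y t)"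

lemma has_derivative_poly_val_along:
  assumes "\<And>m p. m \<in> set P \<Longrightarrow> p \<in> set m \<Longrightarrow> fst p + snd p < \<beta>" and "x \<in> I"
  shows "((\<lambda>t. poly_val (partials_along t) P) has_real_derivative
           poly_val (partials_along x) (dpoly P)) (at x within I)"
  using assms(1)
proof (induction P)
  case Nil
  then show ?case by (simp add: poly_val_def dpoly_def)
next
  case (Cons m P)
  have "((\<lambda>t. mono_val (partials_along t) m) has_real_derivative
      poly_val (partials_along x) (dmono m)) (at x within I)"
  proof (rule has_derivative_mono_val)
    fix p assume "p \<in> set m"
    then have "fst p + snd p < \<beta>" using Cons.prems[of m p] by simp
    then show "((\<lambda>t. partials_along t p) has_real_derivative partials_along x (Suc (fst p), snd p)
        + partials_along x (fst p, Suc (snd p)) * partials_along x (0, 0)) (at x within I)"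
      using has_derivative_F_along_solution[OF _ \<open>x \<in> I\<close>] by (cases p) (simp add: partials_along_def F_0_0)
  qed
  then show ?case
    using Cons by (auto simp: poly_val_Cons dpoly_def poly_val_append intro!: DERIV_add)
qed

lemma abs_partials_along_le_1: "fst p + snd p \<le> \<beta> \<Longrightarrow> x \<in> I \<Longrightarrow> \<bar>partials_along x p\<bar> \<le> 1"
  unfolding partials_along_def using abs_F_le_1 solution_in_J by (cases p) simp

lemma partials_along_Lipschitz:
  assumes "fst p + snd p \<le> \<beta>" "x \<in> I" "x' \<in> I"
  shows "\<bar>partials_along x p - partials_along x' p\<bar> \<le> 2 * \<bar>x - x'\<bar>"
proof -
  have "\<bar>partials_along x p - partials_along x' p\<bar> \<le> \<bar>x - x'\<bar> + \<bar>y x - y x'\<bar>"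
    using F_x_Lipschitz[of "fst p" "snd p" x x' "y x"] F_y_Lipschitz[of "fst p" "snd p" x' "y x" "y x'"]
      assms solution_in_J unfolding partials_along_def by fastforce
  then show ?thesis using abs_solution_diff_le[OF assms(2,3)] by (simp only: mult_2)
qed

lemma has_derivative_hderiv_solution:
  "k \<le> \<beta> \<Longrightarrow> x \<in> I \<Longrightarrow>
   (hderiv I k y has_real_derivative poly_val (partials_along x) (yderiv_poly k)) (at x within I)"
proof (induction k arbitrary: x)
  case 0
  then show ?case
    using solution by (simp add: hderiv_def yderiv_poly_def poly_val_def mono_val_def partials_along_def F_0_0)
next
  case (Suc k)
  have "((\<lambda>t. poly_val (partials_along t) (yderiv_poly k)) has_real_derivative
      poly_val (partials_along x) (yderiv_poly (Suc k))) (at x within I)"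
    unfolding yderiv_poly_Suc using Suc.prems order_le_of_mem_yderiv_poly[of _ k]
    by (intro has_derivative_poly_val_along) fastforce+
  then show ?case
  proof (rule has_field_derivative_transform_within[OF _ zero_less_one \<open>x \<in> I\<close>])
    fix t assume "t \<in> I" "dist t x < 1"
    then show "poly_val (partials_along t) (yderiv_poly k) = hderiv I (Suc k) y t"
      using vector_derivative_within_Icc_eq[OF xl_less_xr _ Suc.IH] Suc.prems by (simp add: hderiv_def)
  qed
qed

lemma hderiv_Suc_solution:
  "k \<le> \<beta> \<Longrightarrow> x \<in> I \<Longrightarrow> hderiv I (Suc k) y x = poly_val (partials_along x) (yderiv_poly k)"
  using vector_derivative_within_Icc_eq[OF xl_less_xr _ has_derivative_hderiv_solution]
  by (simp add: hderiv_def)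

lemma abs_hderiv_solution_le:
  assumes "k \<le> \<beta>" "x \<in> I"
  shows "\<bar>hderiv I (Suc k) y x\<bar> \<le> 2 ^ k * fact k"
proof -
  have "\<bar>poly_val (partials_along x) (yderiv_poly k)\<bar> \<le> length (yderiv_poly k)"
    using assms order_le_of_mem_yderiv_poly[of _ k]
    by (intro abs_poly_val_le_length abs_partials_along_le_1) fastforce+
  also have "\<dots> \<le> 2 ^ k * fact k" by (rule length_yderiv_poly_le)
  finally show ?thesis using hderiv_Suc_solution assms by simp
qed

lemma hderiv_solution_Lipschitz:
  assumes "x \<in> I" "x' \<in> I"
  shows "\<bar>hderiv I (Suc \<beta>) y x - hderiv I (Suc \<beta>) y x'\<bar> \<le> 2 ^ Suc \<beta> * fact (Suc \<beta>) * \<bar>x - x'\<bar>"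
proof -
  have "\<bar>poly_val (partials_along x) (yderiv_poly \<beta>) - poly_val (partials_along x') (yderiv_poly \<beta>)\<bar>
      \<le> length (yderiv_poly \<beta>) * (Suc \<beta> * (2 * \<bar>x - x'\<bar>))"
    using assms length_le_of_mem_yderiv_poly[of _ \<beta>] order_le_of_mem_yderiv_poly[of _ \<beta>]
    by (intro abs_poly_val_diff_le) (auto intro!: abs_partials_along_le_1 partials_along_Lipschitz)
  also have "\<dots> \<le> 2 ^ \<beta> * fact \<beta> * (Suc \<beta> * (2 * \<bar>x - x'\<bar>))"
    using length_yderiv_poly_le by (intro mult_right_mono) auto
  also have "\<dots> = 2 ^ Suc \<beta> * fact (Suc \<beta>) * \<bar>x - x'\<bar>"
    by (simp add: algebra_simps)
  finally show ?thesis using hderiv_Suc_solution assms by simp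
qed

end

theorem lemma3p2:
  fixes \<beta> :: nat and x0 y0 a b :: real
    and f :: "real \<times> real \<Rightarrow> real" and y :: "real \<Rightarrow> real"
  assumes "a > 0" and "b > 0"
    and "continuous_on ({x0-a..x0+a} \<times> {y0-b..y0+b}) f"
    and "partials_exist {x0-a..x0+a} {y0-b..y0+b} \<beta> f"
    and "\<forall>p1 p2. p1 + p2 \<le> \<beta> \<longrightarrow> (\<forall>z \<in> {x0-a..x0+a} \<times> {y0-b..y0+b}.
           \<bar>pD {x0-a..x0+a} {y0-b..y0+b} (p1, p2) f z\<bar> \<le> 1)"
    and "\<forall>p1 p2. p1 + p2 = \<beta> \<longrightarrow>
           (\<forall>x\<in>{x0-a..x0+a}. \<forall>u\<in>{y0-b..y0+b}. \<forall>x'\<in>{x0-a..x0+a}. \<forall>u'\<in>{y0-b..y0+b}.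
             \<bar>pD {x0-a..x0+a} {y0-b..y0+b} (p1, p2) f (x, u)
               - pD {x0-a..x0+a} {y0-b..y0+b} (p1, p2) f (x', u')\<bar>
             \<le> max \<bar>x - x'\<bar> \<bar>u - u'\<bar>)"
    and "y x0 = y0"
    and "\<forall>x\<in>{x0-a..x0+a}. (y has_real_derivative f (x, y x)) (at x within {x0-a..x0+a})"
    and "\<forall>x\<in>{x0-a..x0+a}. (x, y x) \<in> {x0-a..x0+a} \<times> {y0-b..y0+b}"
  shows "(\<forall>k. 1 \<le> k \<and> k \<le> \<beta> + 1 \<longrightarrow>
            (\<forall>x\<in>{x0 - min a b..x0 + min a b}.
               (hderiv {x0-a..x0+a} (k - 1) y has_real_derivative hderiv {x0-a..x0+a} k y x)
                 (at x within {x0-a..x0+a})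
               \<and> \<bar>hderiv {x0-a..x0+a} k y x\<bar> \<le> 2 ^ (k - 1) * fact (k - 1))) \<and>
         (\<forall>x\<in>{x0 - min a b..x0 + min a b}. \<forall>x'\<in>{x0 - min a b..x0 + min a b}.
            \<bar>hderiv {x0-a..x0+a} (\<beta> + 1) y x - hderiv {x0-a..x0+a} (\<beta> + 1) y x'\<bar>
              \<le> 2 ^ (\<beta> + 1) * fact (\<beta> + 1) * \<bar>x - x'\<bar>)"
proof -
  interpret ode_solution_on_rectangle "x0 - a" "x0 + a" "y0 - b" "y0 + b" \<beta> f y
    using assms by unfold_locales auto
  have sub: "{x0 - min a b..x0 + min a b} \<subseteq> I" by auto
  show ?thesis
  proof (intro conjI allI impI ballI)
    fix k x assume k: "1 \<le> k \<and> k \<le> \<beta> + 1" and "x \<in> {x0 - min a b..x0 + min a b}"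
    then have "x \<in> I" using sub by blast
    obtain k' where "k = Suc k'" "k' \<le> \<beta>" using k by (cases k) auto
    then show "(hderiv I (k - 1) y has_real_derivative hderiv I k y x) (at x within I)"
        and "\<bar>hderiv I k y x\<bar> \<le> 2 ^ (k - 1) * fact (k - 1)"
      using has_derivative_hderiv_solution hderiv_Suc_solution abs_hderiv_solution_le \<open>x \<in> I\<close>
      by simp_all
  next
    fix x x' assume "x \<in> {x0 - min a b..x0 + min a b}" "x' \<in> {x0 - min a b..x0 + min a b}"
    then have "x \<in> I" "x' \<in> I" using sub by blast+
    then show "\<bar>hderiv I (\<beta> + 1) y x - hderiv I (\<beta> + 1) y x'\<bar> \<le> 2 ^ (\<beta> + 1) * fact (\<beta> + 1) * \<bar>x - x'\<bar>"
      using hderiv_solution_Lipschitz by simp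
  qed
qed

end
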